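(* Assume (A3) as in the context. For a fixed weight $w\in[0,1]$, the MSE of the sample-split estimator $\widehat\tau_w$ equals $$\frac{2w^2}{|\mathcal D_e|}\mathrm{Var}(\psi_e(O_e))+\frac{2(1-w)^2}{|\mathcal D_e|}\mathrm{Var}(\psi_{h,1}(O_e))+\frac{2(1-w)^2}{|\mathcal D_h|}\mathrm{Var}(\psi_{h,2}(O_h))+\frac{4w(1-w)}{|\mathcal D_e|}\mathrm{Cov}(\psi_e(O_e),\psi_{h,1}(O_e))+(1-w)^2b_h^2.$$
   Context: Setting. Experimental data $\mathcal{D}_e$: i.i.d. $O_e=(S_e,A_e,R_e)$, $A_e\in\{0,1\}$; independent historical data $\mathcal{D}_h$: i.i.d. $O_h=(S_h,R_h)$ under control. $\pi^*(a\mid s)=\mathbb{P}(A_e=a\mid S_e=s)$, $r_e^*(a,s)=\mathbb{E}(R_e\mid A_e=a,S_e=s)$, $r_h^*(s)=\mathbb{E}(R_h\mid S_h=s)$, $\mu^*$ = density ratio of $S_e$ over $S_h$; $\tau_e=\mathbb{E}[r_e^*(1,S_e)-r_e^*(0,S_e)]$. Working models $r_e,r_h,\pi,\mu$, $\nu^a(A_e\mid S_e)=\mathbb{I}(A_e=a)/\pi(a\mid S_e)$; $\psi_e(O_e)=\sum_{a=0}^1(-1)^{a-1}\{r_e(a,S_e)+\nu^a(A_e\mid S_e)[R_e-r_e(A_e,S_e)]\}$, $\psi_{h,1}(O_e)=r_e(1,S_e)+\nu^1(A_e\mid S_e)[R_e-r_e(A_e,S_e)]-r_h(S_e)$, $\psi_{h,2}(O_h)=\mu(S_h)[R_h-r_h(S_h)]$.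 $b_h=\mathbb{E}[r_e^*(0,S_e)]-\mathbb{E}[r_h^*(S_e)]$. Sample splitting: $\mathcal D_e,\mathcal D_h$ are each split into equal halves; $\widehat\tau_e$ = sample mean of $\psi_e$ over the second half of $\mathcal D_e$, $\widehat\tau_h$ = sample mean of $\psi_{h,1}$ over the second half of $\mathcal D_e$ minus sample mean of $\psi_{h,2}$ over the second half of $\mathcal D_h$, $\widehat\tau_w=w\widehat\tau_e+(1-w)\widehat\tau_h$, and $\mathrm{MSE}(\widehat\tau_w)=\mathbb{E}(\widehat\tau_w-\tau_e)^2$. (A3): either the reward functions ($r_e=r_e^*$, $r_h=r_h^*$) or the density ratios ($\pi=\pi^*$, $\mu=\mu^*$) are correctly specified. *)

theory Defs
  imports "HOL-Probability.Probability"
begin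

text \<open>Observations: experimental O_e = (S_e, A_e, R_e) :: 's \<times> bool \<times> real
  (A_e = True encodes treatment a = 1, False encodes a = 0);
  historical O_h = (S_h, R_h) :: 's \<times> real.\<close>

definition Var :: "'a measure \<Rightarrow> ('a \<Rightarrow> real) \<Rightarrow> real" where
  "Var M f = (\<integral>x. (f x - (\<integral>y. f y \<partial>M))\<^sup>2 \<partial>M)"

definition Cov :: "'a measure \<Rightarrow> ('a \<Rightarrow> real) \<Rightarrow> ('a \<Rightarrow> real) \<Rightarrow> real" where
  "Cov M f g = (\<integral>x. (f x - (\<integral>y. f y \<partial>M)) * (g x - (\<integral>y. g y \<partial>M)) \<partial>M)"

definition nu :: "(bool \<Rightarrow> 's \<Rightarrow> real) \<Rightarrow> bool \<Rightarrow> bool \<Rightarrow> 's \<Rightarrow> real" where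
  "nu pr a A s = (if A = a then 1 / pr a s else 0)"

definition psi_e :: "(bool \<Rightarrow> 's \<Rightarrow> real) \<Rightarrow> (bool \<Rightarrow> 's \<Rightarrow> real) \<Rightarrow> 's \<times> bool \<times> real \<Rightarrow> real" where
  "psi_e re pr ob =
     (case ob of (s, A, R) \<Rightarrow>
        (re True s + nu pr True A s * (R - re A s))
      - (re False s + nu pr False A s * (R - re A s)))"

definition psi_h1 :: "(bool \<Rightarrow> 's \<Rightarrow> real) \<Rightarrow> ('s \<Rightarrow> real) \<Rightarrow> (bool \<Rightarrow> 's \<Rightarrow> real)
    \<Rightarrow> 's \<times> bool \<times> real \<Rightarrow> real" where
  "psi_h1 re rh pr ob =
     (case ob of (s, A, R) \<Rightarrow> re True s + nu pr True A s * (R - re A s) - rh s)"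

definition psi_h2 :: "('s \<Rightarrow> real) \<Rightarrow> ('s \<Rightarrow> real) \<Rightarrow> 's \<times> real \<Rightarrow> real" where
  "psi_h2 rh mu ob = (case ob of (s, R) \<Rightarrow> mu s * (R - rh s))"

definition second_half_mean :: "nat \<Rightarrow> ('o \<Rightarrow> real) \<Rightarrow> (nat \<Rightarrow> 'o) \<Rightarrow> real" where
  "second_half_mean n f D = (\<Sum>i\<in>{n div 2..<n}. f (D i)) / real (card {n div 2..<n})"

definition tau_hat_e where
  "tau_hat_e ne re pr De = second_half_mean ne (psi_e re pr) De"

definition tau_hat_h where
  "tau_hat_h ne nh re rh pr mu De Dh =
     second_half_mean ne (psi_h1 re rh pr) De - second_half_mean nh (psi_h2 rh mu) Dh"

definition tau_hat_w where
  "tau_hat_w w ne nh re rh pr mu De Dh =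
     w * tau_hat_e ne re pr De + (1 - w) * tau_hat_h ne nh re rh pr mu De Dh"

definition data_law :: "nat \<Rightarrow> nat \<Rightarrow> 'e measure \<Rightarrow> 'h measure
    \<Rightarrow> ((nat \<Rightarrow> 'e) \<times> (nat \<Rightarrow> 'h)) measure" where
  "data_law ne nh Pe Ph = (\<Pi>\<^sub>M i\<in>{..<ne}. Pe) \<Otimes>\<^sub>M (\<Pi>\<^sub>M i\<in>{..<nh}. Ph)"

text \<open>re_star a s is a version of E(R_e | A_e = a, S_e = s): defining property of
  conditional expectation, tested on the generating sets {A_e = a, S_e in B}.\<close>
definition is_reward_fn_e :: "'s measure \<Rightarrow> ('s \<times> bool \<times> real) measure \<Rightarrow> (bool \<Rightarrow> 's \<Rightarrow> real) \<Rightarrow> bool" where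
  "is_reward_fn_e MSt Pe r \<longleftrightarrow>
     (\<forall>a. r a \<in> borel_measurable MSt) \<and>
     (\<forall>a B. B \<in> sets MSt \<longrightarrow>
        (\<integral>x. indicator {x. fst (snd x) = a \<and> fst x \<in> B} x * snd (snd x) \<partial>Pe)
      = (\<integral>x. indicator {x. fst (snd x) = a \<and> fst x \<in> B} x * r a (fst x) \<partial>Pe))"

text \<open>p a s is a version of P(A_e = a | S_e = s).\<close>
definition is_propensity :: "'s measure \<Rightarrow> ('s \<times> bool \<times> real) measure \<Rightarrow> (bool \<Rightarrow> 's \<Rightarrow> real) \<Rightarrow> bool" where
  "is_propensity MSt Pe p \<longleftrightarrow>
     (\<forall>a. p a \<in> borel_measurable MSt) \<and>
     (\<forall>a B. B \<in> sets MSt \<longrightarrow>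
        measure Pe {x \<in> space Pe. fst (snd x) = a \<and> fst x \<in> B}
      = (\<integral>x. indicator B (fst x) * p a (fst x) \<partial>Pe))"

text \<open>r s is a version of E(R_h | S_h = s).\<close>
definition is_reward_fn_h :: "'s measure \<Rightarrow> ('s \<times> real) measure \<Rightarrow> ('s \<Rightarrow> real) \<Rightarrow> bool" where
  "is_reward_fn_h MSt Ph r \<longleftrightarrow>
     r \<in> borel_measurable MSt \<and>
     (\<forall>B. B \<in> sets MSt \<longrightarrow>
        (\<integral>x. indicator B (fst x) * snd x \<partial>Ph) = (\<integral>x. indicator B (fst x) * r (fst x) \<partial>Ph))"

definition is_density_ratio :: "'s measure \<Rightarrow> ('s \<times> bool \<times> real) measure \<Rightarrow> ('s \<times> real) measure
    \<Rightarrow> ('s \<Rightarrow> real) \<Rightarrow> bool" where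
  "is_density_ratio MSt Pe Ph m \<longleftrightarrow>
     m \<in> borel_measurable MSt \<and> (\<forall>s. 0 \<le> m s) \<and>
     distr Pe MSt fst = density (distr Ph MSt fst) (\<lambda>s. ennreal (m s))"

end

theory Submission
  imports Defs
begin

text \<open>The error of the estimator splits into three parts: the second-half sample mean of
  \<open>w (\<psi>\<^sub>e - E \<psi>\<^sub>e) + (1 - w) (\<psi>\<^sub>h\<^sub>1 - E \<psi>\<^sub>h\<^sub>1)\<close> over the experimental data, minus the
  second-half mean of \<open>(1 - w) (\<psi>\<^sub>h\<^sub>2 - E \<psi>\<^sub>h\<^sub>2)\<close> over the historical data, plus the
  deterministic bias \<open>w E \<psi>\<^sub>e + (1 - w) (E \<psi>\<^sub>h\<^sub>1 - E \<psi>\<^sub>h\<^sub>2) - \<tau>\<^sub>e\<close>. The two random parts are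
  independent and centred, and each averages \<open>n/2\<close> i.i.d. terms, so the mean squared error is
  the squared bias plus the variances of the two sample means, which are \<open>2/n\<^sub>e\<close> and \<open>2/n\<^sub>h\<close>
  times the variances of single terms.

  The bias is computed by double robustness. The augmented inverse-propensity term
  \<open>r\<^sub>e(a,S) + \<nu>\<^sup>a(A|S) (R - r\<^sub>e(A,S))\<close> has mean \<open>E r\<^sub>e\<^sup>*(a,S)\<close> if either \<open>r\<^sub>e\<close> is the true
  reward function (the residual is orthogonal to all functions of \<open>(A,S)\<close>) or \<open>\<pi>\<close> is the true
  propensity (weighting by \<open>\<nu>\<^sup>a\<close> turns \<open>E h(A,S)\<close> into \<open>E h(a,S)\<close>); likewise
  \<open>E \<psi>\<^sub>h\<^sub>2 = E r\<^sub>h\<^sup>*(S\<^sub>e) - E r\<^sub>h(S\<^sub>e)\<close> if \<open>r\<^sub>h\<close> or \<open>\<mu>\<close> is correct. Hence \<open>E \<psi>\<^sub>e = \<tau>\<^sub>e\<close>,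
  \<open>E \<psi>\<^sub>h\<^sub>1 - E \<psi>\<^sub>h\<^sub>2 = \<tau>\<^sub>e + b\<^sub>h\<close>, and the bias is \<open>(1 - w) b\<^sub>h\<close>.\<close>

lemma abs_mult_le_sum_squares: "\<bar>(x::real) * y\<bar> \<le> x\<^sup>2 + y\<^sup>2"
proof -
  have "2 * \<bar>x\<bar> * \<bar>y\<bar> \<le> x\<^sup>2 + y\<^sup>2"
    using sum_squares_bound[of "\<bar>x\<bar>" "\<bar>y\<bar>"] by simp
  moreover have "0 \<le> \<bar>x\<bar> * \<bar>y\<bar>" by simp
  ultimately show ?thesis unfolding abs_mult by linarith
qed

lemma integrable_mult_if_square_integrable:
  fixes f g :: "'a \<Rightarrow> real"
  assumes "f \<in> borel_measurable M" "g \<in> borel_measurable M"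
    and "integrable M (\<lambda>x. (f x)\<^sup>2)" "integrable M (\<lambda>x. (g x)\<^sup>2)"
  shows "integrable M (\<lambda>x. f x * g x)"
  by (rule Bochner_Integration.integrable_bound[OF Bochner_Integration.integrable_add[OF assms(3,4)]])
    (use assms(1,2) in \<open>auto intro!: AE_I2 simp: abs_mult_le_sum_squares\<close>)

lemma integrable_indicator_comp_mult:
  fixes f :: "'a \<Rightarrow> real"
  assumes "integrable M f" "(\<lambda>x. indicator S (t x) * f x) \<in> borel_measurable M"
  shows "integrable M (\<lambda>x. indicator S (t x) * f x)"
  by (rule Bochner_Integration.integrable_bound[OF assms]) (auto simp: indicator_def)

lemma integral_square_centered_lin_comb:
  fixes f g :: "'a \<Rightarrow> real" and \<alpha> \<beta> :: real
  assumes M: "prob_space M"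
    and f: "integrable M f" "integrable M (\<lambda>x. (f x)\<^sup>2)"
    and g: "integrable M g" "integrable M (\<lambda>x. (g x)\<^sup>2)"
  defines "U \<equiv> \<lambda>x. \<alpha> * (f x - integral\<^sup>L M f) + \<beta> * (g x - integral\<^sup>L M g)"
  shows "integrable M U" "integrable M (\<lambda>x. (U x)\<^sup>2)" "integral\<^sup>L M U = 0"
    "integral\<^sup>L M (\<lambda>x. (U x)\<^sup>2) = \<alpha>\<^sup>2 * Var M f + \<beta>\<^sup>2 * Var M g + 2 * \<alpha> * \<beta> * Cov M f g"
proof -
  interpret prob_space M by fact
  have square_centered: "integrable M (\<lambda>x. (h x - c)\<^sup>2)"
    if "integrable M h" "integrable M (\<lambda>x. (h x)\<^sup>2)" for h :: "'a \<Rightarrow> real" and c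
  proof -
    have "(\<lambda>x. (h x - c)\<^sup>2) = (\<lambda>x. (h x)\<^sup>2 - 2 * c * h x + c\<^sup>2)"
      by (simp add: power2_eq_square algebra_simps)
    then show ?thesis using that by simp
  qed
  let ?a = "\<lambda>x. f x - integral\<^sup>L M f" and ?b = "\<lambda>x. g x - integral\<^sup>L M g"
  have a: "integrable M ?a" "integrable M (\<lambda>x. (?a x)\<^sup>2)" using f square_centered by auto
  have b: "integrable M ?b" "integrable M (\<lambda>x. (?b x)\<^sup>2)" using g square_centered by auto
  have ab: "integrable M (\<lambda>x. ?a x * ?b x)"
    using a b by (intro integrable_mult_if_square_integrable) auto
  have U2: "(\<lambda>x. (U x)\<^sup>2) = (\<lambda>x. \<alpha>\<^sup>2 * (?a x)\<^sup>2 + \<beta>\<^sup>2 * (?b x)\<^sup>2 + 2 * \<alpha> * \<beta> * (?a x * ?b x))"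
    unfolding U_def by (simp add: power2_eq_square algebra_simps)
  show "integrable M U" unfolding U_def using a b by auto
  show "integrable M (\<lambda>x. (U x)\<^sup>2)" unfolding U2 using a b ab by auto
  show "integral\<^sup>L M U = 0" unfolding U_def using f g by (simp add: prob_space)
  show "integral\<^sup>L M (\<lambda>x. (U x)\<^sup>2) = \<alpha>\<^sup>2 * Var M f + \<beta>\<^sup>2 * Var M g + 2 * \<alpha> * \<beta> * Cov M f g"
    unfolding U2 Var_def Cov_def using a b ab by simp
qed

lemma integral_PiM_component:
  fixes f :: "'a \<Rightarrow> real"
  assumes M: "\<And>j. j \<in> I \<Longrightarrow> prob_space (M j)" and i: "i \<in> I" and f: "integrable (M i) f"
  shows "integrable (PiM I M) (\<lambda>x. f (x i))" "(\<integral>x. f (x i) \<partial>PiM I M) = integral\<^sup>L (M i) f"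
proof -
  have distr: "distr (PiM I M) (M i) (\<lambda>x. x i) = M i"
    using M i by (rule distr_PiM_component)
  have [measurable]: "(\<lambda>x. x i) \<in> measurable (PiM I M) (M i)" "f \<in> borel_measurable (M i)"
    using i f by auto
  show "integrable (PiM I M) (\<lambda>x. f (x i))"
    using f by (subst integrable_distr_eq[symmetric, where N="M i"]) (auto simp: distr)
  show "(\<integral>x. f (x i) \<partial>PiM I M) = integral\<^sup>L (M i) f"
    by (subst integral_distr[symmetric, where N="M i"]) (auto simp: distr)
qed

lemma integral_PiM_two_components:
  fixes f g :: "'a \<Rightarrow> real"
  assumes M: "prob_space M" and I: "finite I" "i \<in> I" "j \<in> I" "i \<noteq> j"
    and f: "integrable M f" and g: "integrable M g"
  shows "integrable (PiM I (\<lambda>_. M)) (\<lambda>x. f (x i) * g (x j))"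
    "(\<integral>x. f (x i) * g (x j) \<partial>PiM I (\<lambda>_. M)) = integral\<^sup>L M f * integral\<^sup>L M g"
proof -
  interpret product_prob_space "\<lambda>_. M" I
    using M by (simp add: product_prob_space_def product_prob_space_axioms_def
        product_sigma_finite_def prob_space_imp_sigma_finite)
  define h where "h k = (if k = i then f else if k = j then g else (\<lambda>_. 1))" for k
  have h: "integrable M (h k)" for k
    using f g M by (simp add: h_def finite_measure.integrable_const prob_space_def)
  have prod_two: "(\<Prod>k\<in>I. H k) = H i * H j" if "\<And>k. k \<noteq> i \<Longrightarrow> k \<noteq> j \<Longrightarrow> H k = 1"
    for H :: "'b \<Rightarrow> real"
  proof -
    have "(\<Prod>k\<in>I. H k) = H i * H j * (\<Prod>k\<in>I - {i} - {j}. H k)"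
      using I by (simp add: prod.remove mult.assoc)
    also have "(\<Prod>k\<in>I - {i} - {j}. H k) = 1" using that by (intro prod.neutral) auto
    finally show ?thesis by simp
  qed
  have "(\<Prod>k\<in>I. h k (x k)) = f (x i) * g (x j)" for x
    using I by (subst prod_two) (auto simp: h_def)
  moreover have "(\<Prod>k\<in>I. integral\<^sup>L M (h k)) = integral\<^sup>L M f * integral\<^sup>L M g"
    using I M by (subst prod_two) (auto simp: h_def prob_space.prob_space)
  ultimately show "integrable (PiM I (\<lambda>_. M)) (\<lambda>x. f (x i) * g (x j))"
    "(\<integral>x. f (x i) * g (x j) \<partial>PiM I (\<lambda>_. M)) = integral\<^sup>L M f * integral\<^sup>L M g"
    using product_integrable_prod[of I h, OF I(1) h] product_integral_prod[of I h, OF I(1) h]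
    by simp_all
qed

lemma integral_PiM_square_sum:
  fixes f :: "'a \<Rightarrow> real"
  assumes M: "prob_space M" and I: "finite I" "J \<subseteq> I"
    and f: "integrable M f" "integrable M (\<lambda>y. (f y)\<^sup>2)" "integral\<^sup>L M f = 0"
  shows "integrable (PiM I (\<lambda>_. M)) (\<lambda>x. \<Sum>i\<in>J. f (x i))"
    "integrable (PiM I (\<lambda>_. M)) (\<lambda>x. (\<Sum>i\<in>J. f (x i))\<^sup>2)"
    "(\<integral>x. (\<Sum>i\<in>J. f (x i)) \<partial>PiM I (\<lambda>_. M)) = 0"
    "(\<integral>x. (\<Sum>i\<in>J. f (x i))\<^sup>2 \<partial>PiM I (\<lambda>_. M)) = real (card J) * (\<integral>y. (f y)\<^sup>2 \<partial>M)"
proof -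
  let ?P = "PiM I (\<lambda>_. M)"
  have J: "finite J" using I finite_subset by blast
  have component: "integrable ?P (\<lambda>x. h (x i))" "(\<integral>x. h (x i) \<partial>?P) = integral\<^sup>L M h"
    if "i \<in> J" "integrable M h" for i and h :: "'a \<Rightarrow> real"
    using integral_PiM_component[of I "\<lambda>_. M" i h] M I that by auto
  have cross: "integrable ?P (\<lambda>x. f (x i) * f (x j)) \<and>
      (\<integral>x. f (x i) * f (x j) \<partial>?P) = (if i = j then (\<integral>y. (f y)\<^sup>2 \<partial>M) else 0)"
    if "i \<in> J" "j \<in> J" for i j
  proof (cases "i = j")
    case True
    then show ?thesis
      using component[OF that(1) f(2)] by (simp add: power2_eq_square)
  next
    case False
    then show ?thesis
      using integral_PiM_two_components[OF M I(1) _ _ False f(1) f(1)] that I f(3) by auto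
  qed
  have square: "(\<Sum>i\<in>J. f (x i))\<^sup>2 = (\<Sum>i\<in>J. \<Sum>j\<in>J. f (x i) * f (x j))" for x
    by (simp add: power2_eq_square sum_product)
  show "integrable ?P (\<lambda>x. \<Sum>i\<in>J. f (x i))"
    using component(1)[OF _ f(1)] by (intro Bochner_Integration.integrable_sum) auto
  show "(\<integral>x. (\<Sum>i\<in>J. f (x i)) \<partial>?P) = 0"
    using component[OF _ f(1)] f(3) by (subst Bochner_Integration.integral_sum) auto
  show "integrable ?P (\<lambda>x. (\<Sum>i\<in>J. f (x i))\<^sup>2)"
    unfolding square using cross by (intro Bochner_Integration.integrable_sum) auto
  have "(\<integral>x. (\<Sum>i\<in>J. f (x i))\<^sup>2 \<partial>?P) = (\<Sum>i\<in>J. \<Sum>j\<in>J. \<integral>x. f (x i) * f (x j) \<partial>?P)"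
    unfolding square using cross
    by (simp add: Bochner_Integration.integral_sum Bochner_Integration.integrable_sum)
  also have "\<dots> = (\<Sum>i\<in>J. \<Sum>j\<in>J. if i = j then (\<integral>y. (f y)\<^sup>2 \<partial>M) else 0)"
    using cross by (intro sum.cong) auto
  finally show "(\<integral>x. (\<Sum>i\<in>J. f (x i))\<^sup>2 \<partial>?P) = real (card J) * (\<integral>y. (f y)\<^sup>2 \<partial>M)"
    using J by simp
qed

lemma second_half_mean_moments:
  fixes f :: "'a \<Rightarrow> real"
  assumes M: "prob_space M" and n: "even n" "0 < n"
    and f: "integrable M f" "integrable M (\<lambda>y. (f y)\<^sup>2)" "integral\<^sup>L M f = 0"
  shows "integrable (PiM {..<n} (\<lambda>_. M)) (second_half_mean n f)"
    "integrable (PiM {..<n} (\<lambda>_. M)) (\<lambda>D. (second_half_mean n f D)\<^sup>2)"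
    "integral\<^sup>L (PiM {..<n} (\<lambda>_. M)) (second_half_mean n f) = 0"
    "(\<integral>D. (second_half_mean n f D)\<^sup>2 \<partial>PiM {..<n} (\<lambda>_. M)) = 2 / real n * (\<integral>y. (f y)\<^sup>2 \<partial>M)"
proof -
  have card: "real (card {n div 2..<n}) = real n / 2"
    using n by (auto elim!: evenE)
  have half: "{n div 2..<n} \<subseteq> {..<n}" by auto
  note sum = integral_PiM_square_sum[OF M finite_lessThan half f]
  show "integrable (PiM {..<n} (\<lambda>_. M)) (second_half_mean n f)"
    "integral\<^sup>L (PiM {..<n} (\<lambda>_. M)) (second_half_mean n f) = 0"
    using sum(1,3) by (auto simp: second_half_mean_def[abs_def])
  show "integrable (PiM {..<n} (\<lambda>_. M)) (\<lambda>D. (second_half_mean n f D)\<^sup>2)"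
    using sum(2) by (auto simp: second_half_mean_def power_divide)
  show "(\<integral>D. (second_half_mean n f D)\<^sup>2 \<partial>PiM {..<n} (\<lambda>_. M)) = 2 / real n * (\<integral>y. (f y)\<^sup>2 \<partial>M)"
    using sum(4) n by (auto simp: second_half_mean_def power_divide card power2_eq_square)
qed

lemma second_half_mean_add:
  "second_half_mean n (\<lambda>x. f x + g x) D = second_half_mean n f D + second_half_mean n g D"
  by (simp add: second_half_mean_def sum.distrib add_divide_distrib)

lemma second_half_mean_scaled_shift:
  assumes "0 < n"
  shows "second_half_mean n (\<lambda>x. a * (f x - c)) D = a * (second_half_mean n f D - c)"
proof -
  have "card {n div 2..<n} \<noteq> 0" using assms by simp
  then show ?thesis
    by (simp add: second_half_mean_def sum_distrib_left[symmetric] sum_subtractf field_simps)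
qed

lemma (in prob_space) distr_pair_snd:
  assumes "sigma_finite_measure N"
  shows "distr (M \<Otimes>\<^sub>M N) N snd = N"
proof (intro measure_eqI)
  interpret N: sigma_finite_measure N by fact
  fix A assume A: "A \<in> sets (distr (M \<Otimes>\<^sub>M N) N snd)"
  then have "emeasure (distr (M \<Otimes>\<^sub>M N) N snd) A = emeasure (M \<Otimes>\<^sub>M N) (space M \<times> A)"
    by (auto simp: emeasure_distr space_pair_measure dest: sets.sets_into_space
        intro!: arg_cong2[where f=emeasure])
  with A show "emeasure (distr (M \<Otimes>\<^sub>M N) N snd) A = emeasure N A"
    by (simp add: N.emeasure_pair_measure_Times emeasure_space_1)
qed simp

lemma integral_pair_square_diff:
  fixes a :: "'a \<Rightarrow> real" and b :: "'b \<Rightarrow> real"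
  assumes M1: "prob_space M1" and M2: "prob_space M2"
    and a: "integrable M1 a" "integrable M1 (\<lambda>x. (a x)\<^sup>2)" "integral\<^sup>L M1 a = 0"
    and b: "integrable M2 b" "integrable M2 (\<lambda>y. (b y)\<^sup>2)" "integral\<^sup>L M2 b = 0"
  shows "(\<integral>z. (a (fst z) - b (snd z) + c)\<^sup>2 \<partial>(M1 \<Otimes>\<^sub>M M2))
       = (\<integral>x. (a x)\<^sup>2 \<partial>M1) + (\<integral>y. (b y)\<^sup>2 \<partial>M2) + c\<^sup>2"
proof -
  interpret M1: prob_space M1 by fact
  interpret M2: prob_space M2 by fact
  interpret P: pair_prob_space M1 M2 by unfold_locales
  have [measurable]: "a \<in> borel_measurable M1" "b \<in> borel_measurable M2" using a b by auto
  have first: "integrable (M1 \<Otimes>\<^sub>M M2) (\<lambda>z. f (fst z))" "(\<integral>z. f (fst z) \<partial>(M1 \<Otimes>\<^sub>M M2)) = integral\<^sup>L M1 f"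
    if "integrable M1 f" for f :: "'a \<Rightarrow> real"
    using that M2.distr_pair_fst[of M1]
    by (auto simp: integrable_distr_eq[symmetric, where N=M1] integral_distr[symmetric, where N=M1])
  have second: "integrable (M1 \<Otimes>\<^sub>M M2) (\<lambda>z. f (snd z))" "(\<integral>z. f (snd z) \<partial>(M1 \<Otimes>\<^sub>M M2)) = integral\<^sup>L M2 f"
    if "integrable M2 f" for f :: "'b \<Rightarrow> real"
    using that M1.distr_pair_snd[OF M2.sigma_finite_measure_axioms]
    by (auto simp: integrable_distr_eq[symmetric, where N=M2] integral_distr[symmetric, where N=M2])
  have ab: "integrable (M1 \<Otimes>\<^sub>M M2) (\<lambda>z. a (fst z) * b (snd z))"
    using first(1)[OF a(2)] second(1)[OF b(2)] by (intro integrable_mult_if_square_integrable) auto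
  have "(\<integral>z. a (fst z) * b (snd z) \<partial>(M1 \<Otimes>\<^sub>M M2)) = (\<integral>x. (\<integral>y. a x * b y \<partial>M2) \<partial>M1)"
    using P.integral_fst'[OF ab] by simp
  then have cross: "(\<integral>z. a (fst z) * b (snd z) \<partial>(M1 \<Otimes>\<^sub>M M2)) = 0"
    using b(3) by simp
  have "(\<lambda>z. (a (fst z) - b (snd z) + c)\<^sup>2) = (\<lambda>z. (a (fst z))\<^sup>2 + (b (snd z))\<^sup>2 + c\<^sup>2
      + 2 * c * a (fst z) - 2 * c * b (snd z) - 2 * (a (fst z) * b (snd z)))"
    by (simp add: power2_eq_square algebra_simps)
  then show ?thesis
    using first[OF a(1)] first[OF a(2)] second[OF b(1)] second[OF b(2)] ab cross a(3) b(3) P.prob_space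
    by simp
qed

lemma integral_comp_mult_eq_0_if_orthogonal_indicators:
  fixes Z :: "'a \<Rightarrow> real" and g :: "'b \<Rightarrow> real"
  assumes M: "prob_space M" and s: "s \<in> measurable M N" and Z: "integrable M Z"
    and orth: "\<And>B. B \<in> sets N \<Longrightarrow> (\<integral>x. indicator B (s x) * Z x \<partial>M) = 0"
    and g: "g \<in> borel_measurable N" and gZ: "integrable M (\<lambda>x. g (s x) * Z x)"
  shows "(\<integral>x. g (s x) * Z x \<partial>M) = 0"
proof -
  interpret prob_space M by fact
  define F where "F = vimage_algebra (space M) s N"
  have s_space: "s \<in> space M \<rightarrow> space N" using s by (auto dest: measurable_space)
  have sets_F: "sets F = {s -` B \<inter> space M | B. B \<in> sets N}"
    unfolding F_def by (rule sets_vimage_algebra2[OF s_space])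
  have "subalgebra M F"
    using s unfolding subalgebra_def sets_F by (auto simp: F_def intro: measurable_sets)
  then interpret finite_measure_subalgebra M F
    by unfold_locales
  have [measurable]: "Z \<in> borel_measurable M" using Z by auto
  have "s \<in> measurable F N" unfolding F_def by (rule measurable_vimage_algebra1[OF s_space])
  then have gF: "(\<lambda>x. g (s x)) \<in> borel_measurable F" using g by measurable
  \<comment> \<open>Orthogonality to the generators of \<open>F\<close> makes the conditional expectation of \<open>Z\<close> given \<open>F\<close> vanish.\<close>
  have "AE x in M. real_cond_exp M F Z x = 0"
  proof (rule real_cond_exp_charact)
    fix A assume "A \<in> sets F"
    then obtain B where B: "B \<in> sets N" "A = s -` B \<inter> space M" using sets_F by auto
    have "(\<integral>x\<in>A. Z x \<partial>M) = (\<integral>x. indicator B (s x) * Z x \<partial>M)"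
      unfolding set_lebesgue_integral_def
      by (rule Bochner_Integration.integral_cong) (auto simp: B indicator_def)
    then show "(\<integral>x\<in>A. Z x \<partial>M) = (\<integral>x\<in>A. 0 \<partial>M)"
      using orth[OF B(1)] by (simp add: set_lebesgue_integral_def)
  qed (auto simp: Z)
  then have "(\<integral>x. g (s x) * real_cond_exp M F Z x \<partial>M) = (\<integral>x. 0 \<partial>M)"
    using real_cond_exp_intg(1)[OF gZ gF] by (intro integral_cong_AE) auto
  then show ?thesis
    using real_cond_exp_intg(2)[OF gZ gF] by simp
qed

lemma integrable_comp_if_indicator_integrals_bounded:
  fixes p :: "'b \<Rightarrow> real"
  assumes M: "finite_measure M" and s[measurable]: "s \<in> measurable M N"
    and p[measurable]: "p \<in> borel_measurable N" and nonneg: "\<And>y. 0 \<le> p y"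
    and bounded: "\<And>B. B \<in> sets N \<Longrightarrow> (\<integral>x. indicator B (s x) * p (s x) \<partial>M) \<le> C"
  shows "integrable M (\<lambda>x. p (s x))"
proof -
  interpret finite_measure M by fact
  \<comment> \<open>Only truncations give meaningful bounds: a non-integrable function has Bochner integral 0.\<close>
  define B where "B n = {y \<in> space N. p y \<le> real n}" for n :: nat
  have [measurable]: "B n \<in> sets N" for n unfolding B_def by measurable
  define f where "f n x = ennreal (indicator (B n) (s x) * p (s x))" for n x
  have [measurable]: "f n \<in> borel_measurable M" for n unfolding f_def by measurable
  have f_le: "integral\<^sup>N M (f n) \<le> ennreal C" for n
  proof -
    have "integrable M (\<lambda>x. indicator (B n) (s x) * p (s x))"
      using nonneg by (intro integrable_const_bound[where B="real n"] AE_I2)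
        (auto simp: B_def indicator_def)
    then have "integral\<^sup>N M (f n) = ennreal (\<integral>x. indicator (B n) (s x) * p (s x) \<partial>M)"
      unfolding f_def using nonneg by (intro nn_integral_eq_integral) auto
    then show ?thesis using bounded[of "B n"] by (simp add: ennreal_leI)
  qed
  have "incseq f"
    using nonneg by (intro monoI le_funI) (auto simp: f_def B_def indicator_def intro!: ennreal_leI)
  moreover have "(SUP n. f n x) = ennreal (p (s x))" if "x \<in> space M" for x
  proof (rule antisym)
    show "(SUP n. f n x) \<le> ennreal (p (s x))"
      using nonneg[of "s x"] by (intro SUP_least) (auto simp: f_def indicator_def intro!: ennreal_leI)
    obtain n :: nat where "p (s x) \<le> real n" using real_arch_simple by blast
    with that have "f n x = ennreal (p (s x))"
      by (auto simp: f_def B_def measurable_space[OF s])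
    then show "ennreal (p (s x)) \<le> (SUP n. f n x)" by (metis SUP_upper UNIV_I)
  qed
  ultimately have "(\<integral>\<^sup>+x. ennreal (p (s x)) \<partial>M) = (SUP n. integral\<^sup>N M (f n))"
    by (simp add: nn_integral_monotone_convergence_SUP[symmetric] cong: nn_integral_cong)
  also have "\<dots> \<le> ennreal C" using f_le by (intro SUP_least) auto
  finally show ?thesis
    using nonneg by (intro integrableI_nonneg) (auto simp: le_less_trans)
qed

definition aipw :: "(bool \<Rightarrow> 's \<Rightarrow> real) \<Rightarrow> (bool \<Rightarrow> 's \<Rightarrow> real) \<Rightarrow> bool \<Rightarrow> 's \<times> bool \<times> real \<Rightarrow> real"
  where "aipw re pr a x =
    re a (fst x) + nu pr a (fst (snd x)) (fst x) * (snd (snd x) - re (fst (snd x)) (fst x))"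

lemma psi_e_eq_aipw: "psi_e re pr x = aipw re pr True x - aipw re pr False x"
  by (cases x) (simp add: psi_e_def aipw_def)

lemma psi_h1_eq_aipw: "psi_h1 re rh pr x = aipw re pr True x - rh (fst x)"
  by (cases x) (simp add: psi_h1_def aipw_def)

locale observation_laws = Pe: prob_space Pe + Ph: prob_space Ph
  for MSt :: "'s measure" and Pe :: "('s \<times> bool \<times> real) measure" and Ph :: "('s \<times> real) measure" +
  assumes sets_Pe: "sets Pe = sets (MSt \<Otimes>\<^sub>M (count_space UNIV \<Otimes>\<^sub>M borel))"
    and sets_Ph: "sets Ph = sets (MSt \<Otimes>\<^sub>M borel)"
begin

lemma measurable_state_e[measurable]: "fst \<in> measurable Pe MSt"
  by (subst measurable_cong_sets[OF sets_Pe refl]) (rule measurable_fst)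

lemma measurable_action_e[measurable]: "(\<lambda>x. fst (snd x)) \<in> measurable Pe (count_space UNIV)"
  by (subst measurable_cong_sets[OF sets_Pe refl]) measurable

lemma borel_measurable_reward_e[measurable]: "(\<lambda>x. snd (snd x)) \<in> borel_measurable Pe"
  by (subst measurable_cong_sets[OF sets_Pe refl]) measurable

lemma measurable_state_h[measurable]: "fst \<in> measurable Ph MSt"
  by (subst measurable_cong_sets[OF sets_Ph refl]) (rule measurable_fst)

lemma borel_measurable_reward_h[measurable]: "snd \<in> borel_measurable Ph"
  by (subst measurable_cong_sets[OF sets_Ph refl]) measurable

lemma integral_nu_mult_reward:
  assumes r: "is_reward_fn_e MSt Pe r" and pr[measurable]: "pr a \<in> borel_measurable MSt"
    and R: "integrable Pe (\<lambda>x. snd (snd x))" and r_a: "integrable Pe (\<lambda>x. r a (fst x))"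
    and nu_R: "integrable Pe (\<lambda>x. nu pr a (fst (snd x)) (fst x) * snd (snd x))"
    and nu_r: "integrable Pe (\<lambda>x. nu pr a (fst (snd x)) (fst x) * r (fst (snd x)) (fst x))"
  shows "(\<integral>x. nu pr a (fst (snd x)) (fst x) * snd (snd x) \<partial>Pe)
       = (\<integral>x. nu pr a (fst (snd x)) (fst x) * r (fst (snd x)) (fst x) \<partial>Pe)"
proof -
  have [measurable]: "r a \<in> borel_measurable MSt" using r by (simp add: is_reward_fn_e_def)
  define Z where "Z x = indicator {x. fst (snd x) = a} x * (snd (snd x) - r a (fst x))" for x
  have Z: "integrable Pe Z"
    unfolding Z_def using R r_a by (intro integrable_indicator_comp_mult) auto
  have "(\<integral>x. indicator B (fst x) * Z x \<partial>Pe) = 0" if [measurable]: "B \<in> sets MSt" for B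
  proof -
    let ?S = "{x. fst (snd x) = a \<and> fst x \<in> B}"
    have "(\<integral>x. indicator B (fst x) * Z x \<partial>Pe)
        = (\<integral>x. indicator ?S x * snd (snd x) - indicator ?S x * r a (fst x) \<partial>Pe)"
      by (rule Bochner_Integration.integral_cong) (auto simp: Z_def indicator_def)
    also have "\<dots> = 0"
      using R r_a r that by (simp add: integrable_indicator_comp_mult is_reward_fn_e_def)
    finally show ?thesis .
  qed
  moreover have "(\<lambda>x. (\<lambda>s. 1 / pr a s) (fst x) * Z x)
      = (\<lambda>x. nu pr a (fst (snd x)) (fst x) * snd (snd x)
           - nu pr a (fst (snd x)) (fst x) * r (fst (snd x)) (fst x))"
    by (auto simp: Z_def nu_def algebra_simps)
  ultimately have "(\<integral>x. nu pr a (fst (snd x)) (fst x) * snd (snd x)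
           - nu pr a (fst (snd x)) (fst x) * r (fst (snd x)) (fst x) \<partial>Pe) = 0"
    using integral_comp_mult_eq_0_if_orthogonal_indicators[OF Pe.prob_space_axioms measurable_state_e Z,
        of "\<lambda>s. 1 / pr a s"] nu_R nu_r
    by auto
  then show ?thesis using nu_R nu_r by simp
qed

lemma integral_nu_mult_propensity:
  assumes p: "is_propensity MSt Pe pr" and pos: "\<And>s. 0 < pr a s"
    and h[measurable]: "h a \<in> borel_measurable MSt"
    and nu_h: "integrable Pe (\<lambda>x. nu pr a (fst (snd x)) (fst x) * h (fst (snd x)) (fst x))"
    and h_a: "integrable Pe (\<lambda>x. h a (fst x))"
  shows "(\<integral>x. nu pr a (fst (snd x)) (fst x) * h (fst (snd x)) (fst x) \<partial>Pe) = (\<integral>x. h a (fst x) \<partial>Pe)"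
proof -
  have [measurable]: "pr a \<in> borel_measurable MSt" using p by (simp add: is_propensity_def)
  have event: "{x \<in> space Pe. fst (snd x) = a \<and> fst x \<in> B} \<in> sets Pe" if "B \<in> sets MSt" for B
    using that by measurable
  have "integrable Pe (\<lambda>x. pr a (fst x))"
  proof (rule integrable_comp_if_indicator_integrals_bounded[where C=1 and N=MSt])
    fix B assume "B \<in> sets MSt"
    then have "(\<integral>x. indicator B (fst x) * pr a (fst x) \<partial>Pe)
        = measure Pe {x \<in> space Pe. fst (snd x) = a \<and> fst x \<in> B}"
      using p by (simp add: is_propensity_def)
    then show "(\<integral>x. indicator B (fst x) * pr a (fst x) \<partial>Pe) \<le> 1"
      by (simp add: Pe.prob_le_1)
  qed (use pos in \<open>auto intro: Pe.finite_measure_axioms less_imp_le\<close>)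
  define Y :: "'s \<times> bool \<times> real \<Rightarrow> real"
    where "Y x = indicator {x. fst (snd x) = a} x - pr a (fst x)" for x
  have "integrable Pe (\<lambda>x. indicator {x. fst (snd x) = a} x :: real)"
    by (rule Pe.integrable_const_bound[where B=1]) (auto simp: indicator_def)
  then have Y: "integrable Pe Y"
    unfolding Y_def using \<open>integrable Pe (\<lambda>x. pr a (fst x))\<close> by auto
  have "(\<integral>x. indicator B (fst x) * Y x \<partial>Pe) = 0" if [measurable]: "B \<in> sets MSt" for B
  proof -
    let ?S = "{x \<in> space Pe. fst (snd x) = a \<and> fst x \<in> B}"
    have "(\<integral>x. indicator B (fst x) * Y x \<partial>Pe)
        = (\<integral>x. indicator ?S x - indicator B (fst x) * pr a (fst x) \<partial>Pe)"
      by (rule Bochner_Integration.integral_cong) (auto simp: Y_def indicator_def)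
    also have "\<dots> = measure Pe ?S - (\<integral>x. indicator B (fst x) * pr a (fst x) \<partial>Pe)"
      using \<open>integrable Pe (\<lambda>x. pr a (fst x))\<close> event[OF that]
      by (simp add: integrable_indicator_comp_mult Pe.emeasure_finite less_top[symmetric])
    also have "\<dots> = 0"
      using p that by (simp add: is_propensity_def)
    finally show ?thesis .
  qed
  moreover have "(\<lambda>x. (\<lambda>s. h a s / pr a s) (fst x) * Y x)
      = (\<lambda>x. nu pr a (fst (snd x)) (fst x) * h (fst (snd x)) (fst x) - h a (fst x))"
    using pos[THEN less_imp_neq] by (auto simp: Y_def nu_def field_simps)
  ultimately have "(\<integral>x. nu pr a (fst (snd x)) (fst x) * h (fst (snd x)) (fst x) - h a (fst x) \<partial>Pe) = 0"
    using integral_comp_mult_eq_0_if_orthogonal_indicators[OF Pe.prob_space_axioms measurable_state_e Y,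
        of "\<lambda>s. h a s / pr a s"] nu_h h_a
    by auto
  then show ?thesis using nu_h h_a by simp
qed

lemma integral_aipw:
  assumes re_star: "is_reward_fn_e MSt Pe re_star" and pr_star: "is_propensity MSt Pe pr_star"
    and models: "re = re_star \<or> pr = pr_star"
    and re[measurable]: "re a \<in> borel_measurable MSt" and pr: "pr a \<in> borel_measurable MSt"
    and pos: "\<And>s. 0 < pr a s"
    and R: "integrable Pe (\<lambda>x. snd (snd x))"
    and re_star_a: "integrable Pe (\<lambda>x. re_star a (fst x))" and re_a: "integrable Pe (\<lambda>x. re a (fst x))"
    and nu_R: "integrable Pe (\<lambda>x. nu pr a (fst (snd x)) (fst x) * snd (snd x))"
    and nu_re: "integrable Pe (\<lambda>x. nu pr a (fst (snd x)) (fst x) * re (fst (snd x)) (fst x))"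
    and nu_re_star: "integrable Pe (\<lambda>x. nu pr a (fst (snd x)) (fst x) * re_star (fst (snd x)) (fst x))"
  shows "integrable Pe (aipw re pr a)" "integral\<^sup>L Pe (aipw re pr a) = (\<integral>x. re_star a (fst x) \<partial>Pe)"
proof -
  have aipw_split: "aipw re pr a = (\<lambda>x. re a (fst x) + (nu pr a (fst (snd x)) (fst x) * snd (snd x)
      - nu pr a (fst (snd x)) (fst x) * re (fst (snd x)) (fst x)))"
    by (auto simp: aipw_def algebra_simps)
  show "integrable Pe (aipw re pr a)"
    unfolding aipw_split using re_a nu_R nu_re by auto
  have ipw: "(\<integral>x. nu pr a (fst (snd x)) (fst x) * snd (snd x) \<partial>Pe)
      = (\<integral>x. nu pr a (fst (snd x)) (fst x) * re_star (fst (snd x)) (fst x) \<partial>Pe)"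
    by (rule integral_nu_mult_reward[OF re_star pr R re_star_a nu_R nu_re_star])
  from models show "integral\<^sup>L Pe (aipw re pr a) = (\<integral>x. re_star a (fst x) \<partial>Pe)"
  proof
    assume "re = re_star"
    then show ?thesis unfolding aipw_split using ipw re_a nu_R nu_re by simp
  next
    assume "pr = pr_star"
    then have p: "is_propensity MSt Pe pr" using pr_star by simp
    have [measurable]: "re_star a \<in> borel_measurable MSt"
      using re_star by (simp add: is_reward_fn_e_def)
    show ?thesis
      unfolding aipw_split
      using ipw re_a nu_R nu_re integral_nu_mult_propensity[OF p pos _ nu_re re_a]
        integral_nu_mult_propensity[OF p pos _ nu_re_star re_star_a]
      by simp
  qed
qed

lemma integral_mult_reward_h:
  assumes r: "is_reward_fn_h MSt Ph r" and g[measurable]: "g \<in> borel_measurable MSt"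
    and R: "integrable Ph snd" and r1: "integrable Ph (\<lambda>y. r (fst y))"
    and g_R: "integrable Ph (\<lambda>y. g (fst y) * snd y)" and g_r: "integrable Ph (\<lambda>y. g (fst y) * r (fst y))"
  shows "(\<integral>y. g (fst y) * snd y \<partial>Ph) = (\<integral>y. g (fst y) * r (fst y) \<partial>Ph)"
proof -
  have [measurable]: "r \<in> borel_measurable MSt" using r by (simp add: is_reward_fn_h_def)
  define Z where "Z y = snd y - r (fst y)" for y
  have Z: "integrable Ph Z" unfolding Z_def using R r1 by auto
  have orth: "(\<integral>y. indicator B (fst y) * Z y \<partial>Ph) = 0" if [measurable]: "B \<in> sets MSt" for B
  proof -
    have "(\<integral>y. indicator B (fst y) * Z y \<partial>Ph)
        = (\<integral>y. indicator B (fst y) * snd y - indicator B (fst y) * r (fst y) \<partial>Ph)"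
      by (rule Bochner_Integration.integral_cong) (auto simp: Z_def algebra_simps)
    also have "\<dots> = 0"
      using R r1 r that by (simp add: integrable_indicator_comp_mult is_reward_fn_h_def)
    finally show ?thesis .
  qed
  have g_Z: "(\<lambda>y. g (fst y) * Z y) = (\<lambda>y. g (fst y) * snd y - g (fst y) * r (fst y))"
    by (auto simp: Z_def right_diff_distrib)
  have "integrable Ph (\<lambda>y. g (fst y) * Z y)" unfolding g_Z using g_R g_r by auto
  then have "(\<integral>y. g (fst y) * Z y \<partial>Ph) = 0"
    using integral_comp_mult_eq_0_if_orthogonal_indicators[OF Ph.prob_space_axioms measurable_state_h Z orth g]
    by simp
  then show ?thesis using g_R g_r unfolding g_Z by simp
qed

lemma integral_density_ratio_mult:
  assumes m: "is_density_ratio MSt Pe Ph m" and f[measurable]: "f \<in> borel_measurable MSt"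
  shows "(\<integral>y. m (fst y) * f (fst y) \<partial>Ph) = (\<integral>x. f (fst x) \<partial>Pe)"
proof -
  have [measurable]: "m \<in> borel_measurable MSt" and nonneg: "\<And>s. 0 \<le> m s"
    and density: "distr Pe MSt fst = density (distr Ph MSt fst) (\<lambda>s. ennreal (m s))"
    using m by (auto simp: is_density_ratio_def)
  have "(\<integral>x. f (fst x) \<partial>Pe) = integral\<^sup>L (distr Pe MSt fst) f"
    by (simp add: integral_distr)
  also have "\<dots> = integral\<^sup>L (distr Ph MSt fst) (\<lambda>s. m s * f s)"
    unfolding density by (subst integral_density) (auto simp: nonneg)
  also have "\<dots> = (\<integral>y. m (fst y) * f (fst y) \<partial>Ph)"
    by (simp add: integral_distr)
  finally show ?thesis ..
qed

lemma integral_psi_h2: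
  assumes rh_star: "is_reward_fn_h MSt Ph rh_star" and mu_star: "is_density_ratio MSt Pe Ph mu_star"
    and models: "rh = rh_star \<or> mu = mu_star"
    and rh[measurable]: "rh \<in> borel_measurable MSt" and mu[measurable]: "mu \<in> borel_measurable MSt"
    and R: "integrable Ph snd" and rh_star_1: "integrable Ph (\<lambda>y. rh_star (fst y))"
    and mu_R: "integrable Ph (\<lambda>y. mu (fst y) * snd y)"
    and mu_rh: "integrable Ph (\<lambda>y. mu (fst y) * rh (fst y))"
    and mu_rh_star: "integrable Ph (\<lambda>y. mu (fst y) * rh_star (fst y))"
  shows "integrable Ph (psi_h2 rh mu)"
    "integral\<^sup>L Ph (psi_h2 rh mu) = (\<integral>x. rh_star (fst x) \<partial>Pe) - (\<integral>x. rh (fst x) \<partial>Pe)"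
proof -
  have psi_h2_split: "psi_h2 rh mu = (\<lambda>y. mu (fst y) * snd y - mu (fst y) * rh (fst y))"
    by (auto simp: psi_h2_def algebra_simps)
  show "integrable Ph (psi_h2 rh mu)"
    unfolding psi_h2_split using mu_R mu_rh by auto
  have [measurable]: "rh_star \<in> borel_measurable MSt"
    using rh_star by (simp add: is_reward_fn_h_def)
  have reward: "(\<integral>y. mu (fst y) * snd y \<partial>Ph) = (\<integral>y. mu (fst y) * rh_star (fst y) \<partial>Ph)"
    by (rule integral_mult_reward_h[OF rh_star mu R rh_star_1 mu_R mu_rh_star])
  from models show "integral\<^sup>L Ph (psi_h2 rh mu) = (\<integral>x. rh_star (fst x) \<partial>Pe) - (\<integral>x. rh (fst x) \<partial>Pe)"
  proof
    assume "rh = rh_star"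
    then show ?thesis unfolding psi_h2_split using reward mu_R mu_rh by simp
  next
    assume "mu = mu_star"
    then have m: "is_density_ratio MSt Pe Ph mu" using mu_star by simp
    show ?thesis
      unfolding psi_h2_split
      using reward mu_R mu_rh integral_density_ratio_mult[OF m] by simp
  qed
qed

end

lemma integral_square_weighted_second_half_means:
  fixes f1 f2 :: "'e \<Rightarrow> real" and g :: "'h \<Rightarrow> real"
  assumes Pe: "prob_space Pe" and Ph: "prob_space Ph"
    and sizes: "even ne" "0 < ne" "even nh" "0 < nh"
    and f1: "integrable Pe f1" "integrable Pe (\<lambda>x. (f1 x)\<^sup>2)"
    and f2: "integrable Pe f2" "integrable Pe (\<lambda>x. (f2 x)\<^sup>2)"
    and g: "integrable Ph g" "integrable Ph (\<lambda>y. (g y)\<^sup>2)"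
  shows "(\<integral>D. (w * second_half_mean ne f1 (fst D)
              + (1 - w) * (second_half_mean ne f2 (fst D) - second_half_mean nh g (snd D)) - t)\<^sup>2
            \<partial>data_law ne nh Pe Ph)
       = 2 * w\<^sup>2 / real ne * Var Pe f1 + 2 * (1 - w)\<^sup>2 / real ne * Var Pe f2
       + 2 * (1 - w)\<^sup>2 / real nh * Var Ph g + 4 * w * (1 - w) / real ne * Cov Pe f1 f2
       + (w * integral\<^sup>L Pe f1 + (1 - w) * (integral\<^sup>L Pe f2 - integral\<^sup>L Ph g) - t)\<^sup>2"
proof -
  interpret Ph: prob_space Ph by fact
  define U where "U x = w * (f1 x - integral\<^sup>L Pe f1) + (1 - w) * (f2 x - integral\<^sup>L Pe f2)" for x
  define V where "V y = (1 - w) * (g y - integral\<^sup>L Ph g)" for y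
  define bias where "bias = w * integral\<^sup>L Pe f1 + (1 - w) * (integral\<^sup>L Pe f2 - integral\<^sup>L Ph g) - t"
  note U = integral_square_centered_lin_comb[OF Pe f1 f2, of w "1 - w", folded U_def]
  have V: "integrable Ph V" "integrable Ph (\<lambda>y. (V y)\<^sup>2)" "integral\<^sup>L Ph V = 0"
    "integral\<^sup>L Ph (\<lambda>y. (V y)\<^sup>2) = (1 - w)\<^sup>2 * Var Ph g"
    using integral_square_centered_lin_comb[OF Ph g g, of "1 - w" 0] g
    by (simp_all add: V_def[abs_def] Ph.prob_space)
  have error: "w * second_half_mean ne f1 De + (1 - w) * (second_half_mean ne f2 De - second_half_mean nh g Dh) - t
      = second_half_mean ne U De - second_half_mean nh V Dh + bias" for De Dh
    unfolding U_def[abs_def] V_def[abs_def] second_half_mean_add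
      second_half_mean_scaled_shift[OF sizes(2)] second_half_mean_scaled_shift[OF sizes(4)]
    by (simp add: bias_def algebra_simps)
  note U_mean = second_half_mean_moments[OF Pe sizes(1,2) U(1-3)]
  note V_mean = second_half_mean_moments[OF Ph sizes(3,4) V(1-3)]
  have "(\<integral>D. (w * second_half_mean ne f1 (fst D)
              + (1 - w) * (second_half_mean ne f2 (fst D) - second_half_mean nh g (snd D)) - t)\<^sup>2
            \<partial>data_law ne nh Pe Ph)
      = (\<integral>D. (second_half_mean ne U (fst D) - second_half_mean nh V (snd D) + bias)\<^sup>2
            \<partial>(PiM {..<ne} (\<lambda>_. Pe) \<Otimes>\<^sub>M PiM {..<nh} (\<lambda>_. Ph)))"
    unfolding data_law_def error ..
  also have "\<dots> = 2 / real ne * (\<integral>x. (U x)\<^sup>2 \<partial>Pe) + 2 / real nh * (\<integral>y. (V y)\<^sup>2 \<partial>Ph) + bias\<^sup>2"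
    using integral_pair_square_diff[OF prob_space_PiM prob_space_PiM U_mean(1-3) V_mean(1-3)] Pe Ph
    by (simp add: U_mean(4) V_mean(4))
  also have "\<dots> = 2 * w\<^sup>2 / real ne * Var Pe f1 + 2 * (1 - w)\<^sup>2 / real ne * Var Pe f2
       + 2 * (1 - w)\<^sup>2 / real nh * Var Ph g + 4 * w * (1 - w) / real ne * Cov Pe f1 f2 + bias\<^sup>2"
    unfolding U(4) V(4) using sizes(2,4) by (simp add: field_simps)
  finally show ?thesis
    unfolding bias_def .
qed

theorem lemma1:
  fixes MSt :: "'s measure"
    and Pe :: "('s \<times> bool \<times> real) measure" and Ph :: "('s \<times> real) measure"
    and re re_star pr pr_star :: "bool \<Rightarrow> 's \<Rightarrow> real"
    and rh rh_star mu mu_star :: "'s \<Rightarrow> real"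
    and ne nh :: nat and w :: real
  assumes Pe: "prob_space Pe" "sets Pe = sets (MSt \<Otimes>\<^sub>M (count_space UNIV \<Otimes>\<^sub>M borel))"
    and Ph: "prob_space Ph" "sets Ph = sets (MSt \<Otimes>\<^sub>M borel)"
    and sizes: "even ne" "ne > 0" "even nh" "nh > 0"
    and w: "0 \<le> w" "w \<le> 1"
    \<comment> \<open>the true nuisance functions\<close>
    and true_re: "is_reward_fn_e MSt Pe re_star"
    and true_pi: "is_propensity MSt Pe pr_star"
    and true_rh: "is_reward_fn_h MSt Ph rh_star"
    and true_mu: "is_density_ratio MSt Pe Ph mu_star"
    \<comment> \<open>working models (fixed, measurable; positive propensity model)\<close>
    and meas_models: "\<And>a. re a \<in> borel_measurable MSt" "\<And>a. pr a \<in> borel_measurable MSt"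
      "rh \<in> borel_measurable MSt" "mu \<in> borel_measurable MSt"
    and pi_pos: "\<And>a s. 0 < pr a s"
    \<comment> \<open>(A3)\<close>
    and A3: "(re = re_star \<and> rh = rh_star) \<or> (pr = pr_star \<and> mu = mu_star)"
    \<comment> \<open>moment conditions\<close>
    and int_e: "integrable Pe (\<lambda>x. snd (snd x))"
      "\<And>a. integrable Pe (\<lambda>x. re_star a (fst x))"
      "\<And>a. integrable Pe (\<lambda>x. re a (fst x))"
      "integrable Pe (\<lambda>x. rh_star (fst x))"
      "integrable Pe (\<lambda>x. rh (fst x))"
      "\<And>a. integrable Pe (\<lambda>x. nu pr a (fst (snd x)) (fst x) * snd (snd x))"
      "\<And>a. integrable Pe (\<lambda>x. nu pr a (fst (snd x)) (fst x) * re (fst (snd x)) (fst x))"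
      "\<And>a. integrable Pe (\<lambda>x. nu pr a (fst (snd x)) (fst x) * re_star (fst (snd x)) (fst x))"
      "integrable Pe (\<lambda>x. (psi_e re pr x)\<^sup>2)"
      "integrable Pe (\<lambda>x. (psi_h1 re rh pr x)\<^sup>2)"
    and int_h: "integrable Ph (\<lambda>x. snd x)"
      "integrable Ph (\<lambda>x. rh_star (fst x))"
      "integrable Ph (\<lambda>x. rh (fst x))"
      "integrable Ph (\<lambda>x. mu (fst x) * snd x)"
      "integrable Ph (\<lambda>x. mu (fst x) * rh (fst x))"
      "integrable Ph (\<lambda>x. mu (fst x) * rh_star (fst x))"
      "integrable Ph (\<lambda>x. (psi_h2 rh mu x)\<^sup>2)"
  defines "tau_e \<equiv> (\<integral>x. re_star True (fst x) - re_star False (fst x) \<partial>Pe)"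
    and "b_h \<equiv> (\<integral>x. re_star False (fst x) \<partial>Pe) - (\<integral>x. rh_star (fst x) \<partial>Pe)"
  shows "(\<integral>D. (tau_hat_w w ne nh re rh pr mu (fst D) (snd D) - tau_e)\<^sup>2 \<partial>(data_law ne nh Pe Ph))
       = 2 * w\<^sup>2 / real ne * Var Pe (psi_e re pr)
       + 2 * (1 - w)\<^sup>2 / real ne * Var Pe (psi_h1 re rh pr)
       + 2 * (1 - w)\<^sup>2 / real nh * Var Ph (psi_h2 rh mu)
       + 4 * w * (1 - w) / real ne * Cov Pe (psi_e re pr) (psi_h1 re rh pr)
       + (1 - w)\<^sup>2 * b_h\<^sup>2"
proof -
  interpret observation_laws MSt Pe Ph
    by (intro observation_laws.intro observation_laws_axioms.intro Pe Ph)
  have e_models: "re = re_star \<or> pr = pr_star" and h_models: "rh = rh_star \<or> mu = mu_star"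
    using A3 by auto
  note aipw = integral_aipw[OF true_re true_pi e_models meas_models(1,2) pi_pos int_e(1-3,6-8)]
  have psi_e: "integrable Pe (psi_e re pr)" "integral\<^sup>L Pe (psi_e re pr) = tau_e"
    using aipw int_e(2) unfolding psi_e_eq_aipw[abs_def] tau_e_def by simp_all
  have psi_h1: "integrable Pe (psi_h1 re rh pr)"
    "integral\<^sup>L Pe (psi_h1 re rh pr) = (\<integral>x. re_star True (fst x) \<partial>Pe) - (\<integral>x. rh (fst x) \<partial>Pe)"
    using aipw int_e(5) unfolding psi_h1_eq_aipw[abs_def] by simp_all
  note psi_h2 = integral_psi_h2[OF true_rh true_mu h_models meas_models(3,4) int_h(1,2,4,5,6)]
  have h_mean: "integral\<^sup>L Pe (psi_h1 re rh pr) - integral\<^sup>L Ph (psi_h2 rh mu) = tau_e + b_h"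
    using psi_h1(2) psi_h2(2) int_e(2) unfolding tau_e_def b_h_def by simp
  have bias: "w * tau_e + (1 - w) * (integral\<^sup>L Pe (psi_h1 re rh pr) - integral\<^sup>L Ph (psi_h2 rh mu)) - tau_e
      = (1 - w) * b_h"
    unfolding h_mean by (simp add: algebra_simps)
  show ?thesis
    unfolding tau_hat_w_def tau_hat_e_def tau_hat_h_def
    using integral_square_weighted_second_half_means[OF Pe(1) Ph(1) sizes psi_e(1) int_e(9)
        psi_h1(1) int_e(10) psi_h2(1) int_h(7), of w tau_e]
    by (simp add: psi_e(2) bias power_mult_distrib)
qed

end
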